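(* There is an absolute constant $C$ such that for all integers $1\le r\le n$ and every graded function $f:\mathbb{I}_n^r\to\mathbb{R}^+$, there exists a real matrix $A$ with $n$ columns and at most $Cnr$ rows such that $\mu_A(J)=f(J)$ for all $J\in\mathbb{I}_n^r$.
   Context: $\mathbb{R}^+$ denotes the positive reals. For integers $i\le j$, $[i:j]=\{i,\dots,j\}$. For integers $r\le n$, $\mathbb{I}_n^r=\{[i:j]:1\le i\le j\le n,\ j<i+r\}$, and $\mathbb{I}_n=\mathbb{I}_n^n$. A function $f:\mathbb{I}_n^r\to\mathbb{R}^+$ is graded if for all $J,J'\in\mathbb{I}_n^r$ with $|J|<|J'|$ one has $f(J)/|J|>f(J')/|J'|$. For a matrix $A=[a_{ij}]$ with $n$ columns, its column-interval maximum prefix sum is $\mu_A:\mathbb{I}_n\to\mathbb{R}$, $\mu_A(J)=\max_{k\ge1}\sum_{i=1}^k\sum_{j\in J}a_{ij}$ (maximum over $k$ ranging over the row indices). *)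

theory Defs
  imports "HOL-Analysis.Analysis"
begin

definition intervals :: "nat \<Rightarrow> nat \<Rightarrow> nat set set" where
  "intervals n r = {{i..j} | i j. 1 \<le> i \<and> i \<le> j \<and> j \<le> n \<and> j < i + r}"

definition graded :: "nat \<Rightarrow> nat \<Rightarrow> (nat set \<Rightarrow> real) \<Rightarrow> bool" where
  "graded n r f \<longleftrightarrow>
     (\<forall>J\<in>intervals n r. \<forall>J'\<in>intervals n r. card J < card J' \<longrightarrow>
        f J / real (card J) > f J' / real (card J'))"

definition mu :: "nat \<Rightarrow> (nat \<Rightarrow> nat \<Rightarrow> real) \<Rightarrow> nat set \<Rightarrow> real" where
  "mu m A J = Max {(\<Sum>i\<in>{1..k}. \<Sum>j\<in>J. A i j) | k. 1 \<le> k \<and> k \<le> m}"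

end

theory Submission
  imports Defs
begin

text \<open>Enumerate the intervals as \<open>K\<^sub>1, \<dots>, K\<^sub>m\<close> with \<open>m \<le> n r\<close> and choose the rows so that
  the \<open>k\<close>-th prefix sum is the test vector equal to \<open>f K\<^sub>k / |K\<^sub>k|\<close> on \<open>K\<^sub>k\<close> and to \<open>-f K\<^sub>k\<close>
  elsewhere. Summed over \<open>J\<close> this vector gives exactly \<open>f J\<close> when \<open>K\<^sub>k = J\<close>; otherwise it
  gives at most \<open>f J\<close>: if \<open>J\<close> leaves \<open>K\<^sub>k\<close> a single negative entry already cancels the
  positive part, and if \<open>J \<subset> K\<^sub>k\<close> gradedness bounds the average \<open>f K\<^sub>k / |K\<^sub>k|\<close> by \<open>f J / |J|\<close>.\<close>

lemma mu_of_prefix_sums: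
  assumes "\<And>j. P 0 j = 0"
  shows "mu m (\<lambda>i j. P i j - P (i - 1) j) J = Max ((\<lambda>k. \<Sum>j\<in>J. P k j) ` {1..m})"
proof -
  have telescope: "(\<Sum>i\<in>{1..k}. P i j - P (i - 1) j) = P k j" for k j
    by (induction k) (simp_all add: assms)
  have "(\<Sum>i\<in>{1..k}. \<Sum>j\<in>J. P i j - P (i - 1) j) = (\<Sum>j\<in>J. P k j)" for k
    by (subst sum.swap) (rule sum.cong[OF refl telescope])
  then have "{(\<Sum>i\<in>{1..k}. \<Sum>j\<in>J. P i j - P (i - 1) j) | k. 1 \<le> k \<and> k \<le> m}
      = (\<lambda>k. \<Sum>j\<in>J. P k j) ` {1..m}"
    by auto
  then show ?thesis
    unfolding mu_def by simp
qed

definition test_row :: "real \<Rightarrow> nat set \<Rightarrow> nat \<Rightarrow> real" where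
  "test_row c K j = (if j \<in> K then c / real (card K) else - c)"

lemma sum_test_row:
  assumes "finite J"
  shows "(\<Sum>j\<in>J. test_row c K j)
    = real (card (J \<inter> K)) * (c / real (card K)) - real (card (J - K)) * c"
proof -
  have "(\<Sum>j\<in>J. test_row c K j) = (\<Sum>j\<in>J \<inter> K. c / real (card K)) + (\<Sum>j\<in>J - K. - c)"
    using assms by (simp add: test_row_def sum.If_cases Diff_eq)
  then show ?thesis by simp
qed

lemma sum_test_row_self:
  assumes "finite K" "K \<noteq> {}"
  shows "(\<Sum>j\<in>K. test_row c K j) = c"
  using assms by (simp add: sum_test_row)

lemma sum_test_row_le:
  assumes J: "finite J" "J \<noteq> {}" and K: "finite K"
    and c: "0 < c" and d: "0 < d"
    and avg: "J \<subseteq> K \<Longrightarrow> c / real (card K) \<le> d / real (card J)"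
  shows "(\<Sum>j\<in>J. test_row c K j) \<le> d"
proof (cases "J \<subseteq> K")
  case True
  have "(\<Sum>j\<in>J. test_row c K j) = real (card J) * (c / real (card K))"
    using True J(1) by (simp add: sum_test_row Int_absorb2)
  also have "\<dots> \<le> real (card J) * (d / real (card J))"
    using avg[OF True] by (intro mult_left_mono) simp_all
  also have "\<dots> = d"
    using J by simp
  finally show ?thesis .
next
  case False
  then have "1 \<le> card (J - K)"
    using J(1) by (simp add: Suc_le_eq card_gt_0_iff)
  then have "c \<le> real (card (J - K)) * c"
    using c by simp
  moreover have "real (card (J \<inter> K)) * (c / real (card K)) \<le> c"
  proof (cases "card K = 0")
    case False
    have "real (card (J \<inter> K)) \<le> real (card K)"
      using K by (simp add: card_mono)
    then show ?thesis
      using False c by (simp add: field_simps)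
  qed (use c in simp)
  ultimately show ?thesis
    using J(1) d by (simp add: sum_test_row)
qed

lemma intervals_finite_nonempty:
  "K \<in> intervals n r \<Longrightarrow> finite K \<and> K \<noteq> {}"
  unfolding intervals_def by auto

lemma graded_subset_avg_le:
  assumes "graded n r f" "J \<in> intervals n r" "K \<in> intervals n r" "J \<subseteq> K"
  shows "f K / real (card K) \<le> f J / real (card J)"
proof (cases "J = K")
  case False
  then have "card J < card K"
    using assms(3,4) intervals_finite_nonempty by (simp add: psubset_card_mono)
  then show ?thesis
    using assms(1-3) unfolding graded_def by fastforce
qed simp

lemma intervals_subset_image:
  "intervals n r \<subseteq> (\<lambda>(i, d). {i..i + d}) ` ({1..n} \<times> {..<r})"
proof
  fix K assume "K \<in> intervals n r"
  then obtain i j where "K = {i..j}" "1 \<le> i" "i \<le> j" "j \<le> n" "j < i + r"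
    unfolding intervals_def by blast
  then have "K = (\<lambda>(i, d). {i..i + d}) (i, j - i)" "(i, j - i) \<in> {1..n} \<times> {..<r}"
    by auto
  then show "K \<in> (\<lambda>(i, d). {i..i + d}) ` ({1..n} \<times> {..<r})"
    by blast
qed

lemma finite_intervals: "finite (intervals n r)"
  by (rule finite_subset[OF intervals_subset_image]) auto

lemma card_intervals_le: "card (intervals n r) \<le> n * r"
proof -
  have "card (intervals n r) \<le> card ((\<lambda>(i, d). {i..i + d}) ` ({1..n} \<times> {..<r}))"
    by (rule card_mono[OF _ intervals_subset_image]) auto
  also have "\<dots> \<le> card ({1..n} \<times> {..<r})"
    by (rule card_image_le) auto
  finally show ?thesis
    by (simp add: card_cartesian_product)
qed

lemma card_intervals_pos:
  assumes "1 \<le> r" "1 \<le> n"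
  shows "0 < card (intervals n r)"
proof -
  have "{1..1} \<in> intervals n r"
    using assms unfolding intervals_def by force
  then show ?thesis
    using finite_intervals card_gt_0_iff by blast
qed

theorem lemma6p5:
  shows "\<exists>C::real. \<forall>n r::nat. \<forall>f::nat set \<Rightarrow> real.
     1 \<le> r \<and> r \<le> n \<and> (\<forall>J\<in>intervals n r. f J > 0) \<and> graded n r f \<longrightarrow>
     (\<exists>(m::nat) (A::nat \<Rightarrow> nat \<Rightarrow> real). 1 \<le> m \<and> real m \<le> C * real n * real r \<and>
        (\<forall>J\<in>intervals n r. mu m A J = f J))"
proof (rule exI[of _ 1], intro allI impI)
  fix n r :: nat and f :: "nat set \<Rightarrow> real"
  assume H: "1 \<le> r \<and> r \<le> n \<and> (\<forall>J\<in>intervals n r. f J > 0) \<and> graded n r f"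
  define m where "m = card (intervals n r)"
  obtain e where e: "bij_betw e {1..m} (intervals n r)"
    using ex_bij_betw_nat_finite_1[OF finite_intervals] unfolding m_def by blast
  define P where "P k = (if k = 0 then (\<lambda>_. 0) else test_row (f (e k)) (e k))" for k
  have "mu m (\<lambda>i j. P i j - P (i - 1) j) J = f J" if J: "J \<in> intervals n r" for J
  proof -
    obtain k where k: "k \<in> {1..m}" "e k = J"
      using e J by (metis bij_betw_iff_bijections)
    have "(\<Sum>j\<in>J. P k j) \<le> f J" if "k \<in> {1..m}" for k
    proof -
      have "e k \<in> intervals n r"
        using that e by (auto simp: bij_betw_def)
      then show ?thesis
        using that J H intervals_finite_nonempty graded_subset_avg_le[of n r f J "e k"]
        by (simp add: P_def sum_test_row_le)
    qed
    moreover have "(\<Sum>j\<in>J. P k j) = f J"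
      using k J intervals_finite_nonempty by (simp add: P_def sum_test_row_self)
    moreover have "mu m (\<lambda>i j. P i j - P (i - 1) j) J = Max ((\<lambda>k. \<Sum>j\<in>J. P k j) ` {1..m})"
      by (rule mu_of_prefix_sums) (simp add: P_def)
    ultimately show ?thesis
      using k(1) by (auto intro!: Max_eqI rev_image_eqI)
  qed
  moreover have "1 \<le> m" "real m \<le> 1 * real n * real r"
    using H card_intervals_pos card_intervals_le[of n r]
    by (simp_all add: m_def Suc_le_eq flip: of_nat_mult)
  ultimately show "\<exists>m A. 1 \<le> m \<and> real m \<le> 1 * real n * real r \<and>
      (\<forall>J\<in>intervals n r. mu m A J = f J)"
    by blast
qed

end
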